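(* In the reward-seeking setting, for every instance and every $b>1$, the naive agent with present-bias parameter $b$ satisfies $b\cdot R_n(s)\ge R_o(s)$; that is, its reward ratio is at most $b$.
   Context: Reward-seeking instance: a finite directed acyclic graph $G=(V,E)$ with nonnegative edge rewards $r(u,v)$, start node $s$ and target node $t$, where $t$ is the unique node with no outgoing edges; the agent must travel from $s$ to $t$ and wishes to collect as much reward as possible. $R_o(u)$ is the maximum total reward of a $u$–$t$ path. The naive agent with bias $b$: $R_n(t)=0$, and for $u\ne t$, $S^{(R)}_n(u)\in\arg\max_{v:(u,v)\in E}\big(b\cdot r(u,v)+R_o(v)\big)$ and $R_n(u)=r(u,S^{(R)}_n(u))+R_n(S^{(R)}_n(u))$; $R_n(s)$ is the reward it collects. The reward ratio is $R_o(s)/R_n(s)$. *)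

theory Defs
  imports Complex_Main
begin

definition reward_instance ::
  "'a set \<Rightarrow> ('a \<times> 'a) set \<Rightarrow> ('a \<Rightarrow> 'a \<Rightarrow> real) \<Rightarrow> 'a \<Rightarrow> 'a \<Rightarrow> bool" where
  "reward_instance V E r s t \<longleftrightarrow>
     finite V \<and> E \<subseteq> V \<times> V \<and> acyclic E \<and> s \<in> V \<and> t \<in> V \<and>
     (\<forall>(u,v)\<in>E. 0 \<le> r u v) \<and>
     (\<forall>v. (t, v) \<notin> E) \<and>
     (\<forall>u\<in>V. u \<noteq> t \<longrightarrow> (\<exists>v. (u, v) \<in> E))"

definition is_path :: "('a \<times> 'a) set \<Rightarrow> 'a \<Rightarrow> 'a \<Rightarrow> 'a list \<Rightarrow> bool" where
  "is_path E u t p \<longleftrightarrow> p \<noteq> [] \<and> hd p = u \<and> last p = t \<and>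
     (\<forall>i < length p - 1. (p ! i, p ! Suc i) \<in> E)"

definition path_reward :: "('a \<Rightarrow> 'a \<Rightarrow> real) \<Rightarrow> 'a list \<Rightarrow> real" where
  "path_reward r p = (\<Sum>i < length p - 1. r (p ! i) (p ! Suc i))"

definition R_opt :: "('a \<times> 'a) set \<Rightarrow> ('a \<Rightarrow> 'a \<Rightarrow> real) \<Rightarrow> 'a \<Rightarrow> 'a \<Rightarrow> real" where
  "R_opt E r t u = Max (path_reward r ` {p. is_path E u t p})"

text \<open>S is a valid (arbitrary tie-breaking) choice rule of the naive agent with bias b.\<close>
definition naive_choice ::
  "'a set \<Rightarrow> ('a \<times> 'a) set \<Rightarrow> ('a \<Rightarrow> 'a \<Rightarrow> real) \<Rightarrow> 'a \<Rightarrow> real \<Rightarrow> ('a \<Rightarrow> 'a) \<Rightarrow> bool" where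
  "naive_choice V E r t b S \<longleftrightarrow>
     (\<forall>u\<in>V. u \<noteq> t \<longrightarrow> (u, S u) \<in> E \<and>
        (\<forall>v. (u, v) \<in> E \<longrightarrow>
           b * r u v + R_opt E r t v \<le> b * r u (S u) + R_opt E r t (S u)))"

text \<open>R_n(u): reward collected by following S from u until t is reached
  (equivalently R_n(t)=0, R_n(u) = r(u,S u) + R_n(S u)).\<close>
definition R_naive :: "('a \<Rightarrow> 'a \<Rightarrow> real) \<Rightarrow> 'a \<Rightarrow> ('a \<Rightarrow> 'a) \<Rightarrow> 'a \<Rightarrow> real" where
  "R_naive r t S u =
     (let k = (LEAST k. (S ^^ k) u = t)
      in \<Sum>i < k. r ((S ^^ i) u) ((S ^^ Suc i) u))"

end

theory Submission
  imports Defs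
begin

text \<open>Along an optimal path with first edge (u,v), R_o(u) = r(u,v) + R_o(v) \<le> b r(u,v) + R_o(v),
  and the naive agent picks a successor maximising the right-hand side, so
  R_o(u) \<le> b r(u, S u) + R_o(S u). Summing this along the naive agent's walk from s to t
  telescopes to R_o(s) \<le> b R_n(s) + R_o(t) = b R_n(s). Acyclicity and finiteness ensure that
  the walk reaches t and that the maxima defining R_o exist.\<close>

lemma chain_in_trancl:
  assumes "\<And>k. k < n \<Longrightarrow> (f k, f (Suc k)) \<in> E" and "i < j" and "j \<le> n"
  shows "(f i, f j) \<in> E\<^sup>+"
  using assms(2,3)
proof (induction j)
  case 0
  then show ?case by simp
next
  case (Suc j)
  have step: "(f j, f (Suc j)) \<in> E" using Suc.prems assms(1) by simp
  show ?case
  proof (cases "i = j")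
    case True
    then show ?thesis using step by auto
  next
    case False
    then have "(f i, f j) \<in> E\<^sup>+" using Suc by simp
    then show ?thesis using step by (rule trancl_into_trancl)
  qed
qed

lemma sum_telescoping_bound:
  fixes f c :: "nat \<Rightarrow> real"
  assumes "\<And>i. i < k \<Longrightarrow> f i \<le> c i + f (Suc i)"
  shows "f 0 \<le> (\<Sum>i<k. c i) + f k"
  using assms by (induction k) force+

context
  fixes V :: "'a set" and E :: "('a \<times> 'a) set" and t :: 'a and S :: "'a \<Rightarrow> 'a"
  assumes finite_V: "finite V" and E_sub: "E \<subseteq> V \<times> V" and acyclic_E: "acyclic E"
    and succ_edge: "\<And>u. u \<in> V \<Longrightarrow> u \<noteq> t \<Longrightarrow> (u, S u) \<in> E"
begin

lemma successor_walk_in_V: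
  assumes "u \<in> V" and "\<forall>j<i. (S ^^ j) u \<noteq> t"
  shows "(S ^^ i) u \<in> V"
  using assms(2)
proof (induction i)
  case 0
  then show ?case using assms(1) by simp
next
  case (Suc i)
  then have "((S ^^ i) u, (S ^^ Suc i) u) \<in> E" using succ_edge by simp
  then show ?case using E_sub by auto
qed

lemma successor_walk_edge:
  assumes "u \<in> V" and "\<forall>j\<le>i. (S ^^ j) u \<noteq> t"
  shows "((S ^^ i) u, (S ^^ Suc i) u) \<in> E"
  using successor_walk_in_V[OF assms(1)] assms(2) succ_edge by simp

lemma successor_walk_reaches:
  assumes "u \<in> V"
  shows "\<exists>k. (S ^^ k) u = t"
proof (rule ccontr)
  assume "\<nexists>k. (S ^^ k) u = t"
  then have edge: "((S ^^ k) u, (S ^^ Suc k) u) \<in> E" for k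
    using successor_walk_edge[OF assms] by simp
  have "range (\<lambda>k. (S ^^ k) u) \<subseteq> V"
    using successor_walk_in_V[OF assms] \<open>\<nexists>k. (S ^^ k) u = t\<close> by auto
  then have "\<not> inj (\<lambda>k. (S ^^ k) u)"
    using finite_V finite_subset finite_imageD infinite_UNIV_nat by blast
  then obtain i j where "i < j" and "(S ^^ i) u = (S ^^ j) u"
    unfolding inj_def by (metis linorder_neqE_nat)
  moreover have "((S ^^ i) u, (S ^^ j) u) \<in> E\<^sup>+"
    using chain_in_trancl[of j "\<lambda>k. (S ^^ k) u" E i j] edge \<open>i < j\<close> by simp
  ultimately show False using acyclic_E unfolding acyclic_def by simp
qed

lemma successor_walk_first_hit:
  assumes "u \<in> V"
  defines "k \<equiv> LEAST k. (S ^^ k) u = t"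
  shows "(S ^^ k) u = t" and "i < k \<Longrightarrow> ((S ^^ i) u, (S ^^ Suc i) u) \<in> E"
    and "i < k \<Longrightarrow> (S ^^ i) u \<in> V - {t}"
proof -
  show "(S ^^ k) u = t"
    unfolding k_def using successor_walk_reaches[OF assms(1)] by (rule LeastI_ex)
  have before: "\<forall>j<k. (S ^^ j) u \<noteq> t" unfolding k_def using not_less_Least by blast
  show "i < k \<Longrightarrow> ((S ^^ i) u, (S ^^ Suc i) u) \<in> E"
    using successor_walk_edge[OF assms(1)] before by simp
  show "i < k \<Longrightarrow> (S ^^ i) u \<in> V - {t}"
    using successor_walk_in_V[OF assms(1)] before by simp
qed

lemma successor_walk_is_path:
  assumes "u \<in> V"
  shows "is_path E u t (map (\<lambda>i. (S ^^ i) u) [0..<Suc (LEAST k. (S ^^ k) u = t)])"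
  using successor_walk_first_hit[OF assms]
  by (auto simp: is_path_def hd_map last_map nth_append simp del: upt_Suc)

end

lemma is_path_distinct:
  assumes "acyclic E" and "is_path E u t p"
  shows "distinct p"
  unfolding distinct_conv_nth
proof (intro allI impI notI)
  fix i j
  assume "i < length p" "j < length p" "i \<noteq> j" "p ! i = p ! j"
  then obtain a c where "a < c" "c < length p" "p ! a = p ! c"
    by (metis linorder_neqE_nat)
  moreover have "(p ! a, p ! c) \<in> E\<^sup>+"
    using assms(2) \<open>a < c\<close> \<open>c < length p\<close>
    by (intro chain_in_trancl[of "length p - 1"]) (auto simp: is_path_def)
  ultimately show False using assms(1) unfolding acyclic_def by simp
qed

lemma is_path_subset:
  assumes "E \<subseteq> V \<times> V" and "u \<in> V" and "is_path E u t p"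
  shows "set p \<subseteq> V"
proof -
  have "p ! i \<in> V" if "i < length p" for i
    using that
  proof (induction i)
    case 0
    then show ?case using assms(2,3) unfolding is_path_def by (metis hd_conv_nth)
  next
    case (Suc i)
    then have "(p ! i, p ! Suc i) \<in> E" using assms(3) unfolding is_path_def by auto
    then show ?case using assms(1) by auto
  qed
  then show ?thesis by (auto simp: in_set_conv_nth)
qed

lemma is_path_Cons:
  assumes "is_path E u t p" and "u \<noteq> t"
  obtains v q where "p = u # q" and "(u, v) \<in> E" and "is_path E v t q"
    and "path_reward r p = r u v + path_reward r q"
proof -
  obtain q where p: "p = u # q" using assms(1) unfolding is_path_def by (cases p) auto
  have "q \<noteq> []" using assms unfolding p is_path_def by auto
  have edges: "\<forall>i<length q. ((u # q) ! i, (u # q) ! Suc i) \<in> E"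
    using assms(1) unfolding p is_path_def by simp
  have "(q ! i, q ! Suc i) \<in> E" if "i < length q - 1" for i
    using edges[rule_format, of "Suc i"] that by simp
  then have "is_path E (hd q) t q"
    using assms(1) \<open>q \<noteq> []\<close> unfolding p is_path_def by simp
  moreover have "(u, hd q) \<in> E"
    using edges \<open>q \<noteq> []\<close> by (force simp: hd_conv_nth)
  moreover have "path_reward r p = r u (hd q) + path_reward r q"
    using \<open>q \<noteq> []\<close> unfolding p path_reward_def
    by (cases q) (simp_all add: sum.lessThan_Suc_shift del: sum.lessThan_Suc)
  ultimately show thesis using p that by blast
qed

context
  fixes V :: "'a set" and E :: "('a \<times> 'a) set" and r :: "'a \<Rightarrow> 'a \<Rightarrow> real" and s t :: 'a
  assumes inst: "reward_instance V E r s t"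
begin

lemma finite_paths:
  assumes "u \<in> V"
  shows "finite {p. is_path E u t p}"
proof (rule finite_subset)
  have "finite V" "E \<subseteq> V \<times> V" "acyclic E" using inst unfolding reward_instance_def by auto
  show "{p. is_path E u t p} \<subseteq> {xs. set xs \<subseteq> V \<and> distinct xs}"
    using is_path_distinct[OF \<open>acyclic E\<close>] is_path_subset[OF \<open>E \<subseteq> V \<times> V\<close> assms] by blast
  show "finite {xs. set xs \<subseteq> V \<and> distinct xs}"
    using finite_subset_distinct[OF \<open>finite V\<close>] by simp
qed

lemma paths_nonempty:
  assumes "u \<in> V"
  shows "\<exists>p. is_path E u t p"
proof -
  have "finite V" "E \<subseteq> V \<times> V" "acyclic E" and out: "\<forall>w\<in>V. w \<noteq> t \<longrightarrow> (\<exists>v. (w, v) \<in> E)"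
    using inst unfolding reward_instance_def by auto
  have "(w, SOME v. (w, v) \<in> E) \<in> E" if "w \<in> V" "w \<noteq> t" for w
    using out that by (metis someI_ex)
  from successor_walk_is_path[OF \<open>finite V\<close> \<open>E \<subseteq> V \<times> V\<close> \<open>acyclic E\<close> this assms]
  show ?thesis by blast
qed

lemma R_opt_attained:
  assumes "u \<in> V"
  obtains p where "is_path E u t p" and "R_opt E r t u = path_reward r p"
proof -
  have "finite (path_reward r ` {p. is_path E u t p})"
    and "path_reward r ` {p. is_path E u t p} \<noteq> {}"
    using finite_paths paths_nonempty assms by auto
  from Max_in[OF this] show thesis using that unfolding R_opt_def by auto
qed

lemma path_reward_le_R_opt:
  "v \<in> V \<Longrightarrow> is_path E v t p \<Longrightarrow> path_reward r p \<le> R_opt E r t v"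
  unfolding R_opt_def using finite_paths by (intro Max_ge) auto

lemma R_opt_target: "R_opt E r t t = 0"
proof -
  have "p = [t]" if "is_path E t t p" for p
  proof (cases p)
    case (Cons x q)
    have "x = t" using that Cons unfolding is_path_def by simp
    moreover have "q = []"
    proof (rule ccontr)
      assume "q \<noteq> []"
      then obtain y q' where "q = y # q'" by (cases q) auto
      then have "(t, y) \<in> E"
        using that \<open>x = t\<close> Cons unfolding is_path_def
        by (metis One_nat_def length_Cons nth_Cons_0 nth_Cons_Suc zero_less_Suc diff_Suc_1)
      then show False using inst unfolding reward_instance_def by blast
    qed
    ultimately show ?thesis using Cons by simp
  qed (use that in \<open>simp add: is_path_def\<close>)
  then have "{p. is_path E t t p} = {[t]}" by (auto simp: is_path_def)
  then show ?thesis unfolding R_opt_def path_reward_def by simp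
qed

lemma R_opt_le_first_step:
  assumes "u \<in> V" and "u \<noteq> t"
  obtains v where "(u, v) \<in> E" and "R_opt E r t u \<le> r u v + R_opt E r t v"
proof -
  obtain p where p: "is_path E u t p" "R_opt E r t u = path_reward r p"
    using R_opt_attained[OF assms(1)] .
  then obtain v q where "(u, v) \<in> E" "is_path E v t q"
    "path_reward r p = r u v + path_reward r q"
    using is_path_Cons assms(2) by metis
  moreover have "v \<in> V" using \<open>(u, v) \<in> E\<close> inst unfolding reward_instance_def by auto
  ultimately show thesis using that p path_reward_le_R_opt by fastforce
qed

lemma R_opt_le_naive_step:
  assumes "b \<ge> 1" and "naive_choice V E r t b S" and "u \<in> V" and "u \<noteq> t"
  shows "R_opt E r t u \<le> b * r u (S u) + R_opt E r t (S u)"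
proof -
  obtain v where v: "(u, v) \<in> E" "R_opt E r t u \<le> r u v + R_opt E r t v"
    using R_opt_le_first_step[OF assms(3,4)] .
  have "r u v \<le> b * r u v"
    using v(1) inst assms(1) unfolding reward_instance_def
    by (auto intro: mult_right_mono[of 1 b, simplified])
  moreover have "b * r u v + R_opt E r t v \<le> b * r u (S u) + R_opt E r t (S u)"
    using assms(2-4) v(1) unfolding naive_choice_def by blast
  ultimately show ?thesis using v(2) by linarith
qed

end

theorem claim5:
  fixes V :: "'a set" and E :: "('a \<times> 'a) set" and r :: "'a \<Rightarrow> 'a \<Rightarrow> real"
    and s t :: 'a and b :: real and S :: "'a \<Rightarrow> 'a"
  assumes "reward_instance V E r s t"
    and "b > 1"
    and "naive_choice V E r t b S"
  shows "b * R_naive r t S s \<ge> R_opt E r t s"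
proof -
  define k where "k = (LEAST k. (S ^^ k) s = t)"
  note walk = successor_walk_first_hit[of V E t S s, folded k_def]
  have walk_facts: "(S ^^ k) s = t" "\<And>i. i < k \<Longrightarrow> (S ^^ i) s \<in> V - {t}"
    using walk assms(1,3) unfolding reward_instance_def naive_choice_def by auto
  have "R_opt E r t s \<le> (\<Sum>i<k. b * r ((S ^^ i) s) ((S ^^ Suc i) s)) + R_opt E r t ((S ^^ k) s)"
    using sum_telescoping_bound[of k "\<lambda>i. R_opt E r t ((S ^^ i) s)"]
      R_opt_le_naive_step[OF assms(1) less_imp_le[OF assms(2)] assms(3)] walk_facts(2)
    by simp
  then show ?thesis
    using walk_facts(1) R_opt_target[OF assms(1)]
    by (simp add: R_naive_def k_def sum_distrib_left)
qed

end
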